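(* Let $\mathcal H$ be the Hessian of an admissible Hamiltonian. Then for all $x,y\in\mathbb R^{2n}$, $J(x)\,\mathcal H\,J(y)=J(y)\,\mathcal H\,J(x)$.
   Context: Fix an integer $n\ge 2$. Points of $\mathbb R^{2n}$ are $x=(x_1,\dots,x_{2n})^{T}$; write $u=(x_1,\dots,x_n)^T$. Let $X(u)$ be the $n\times n$ matrix with entries $X(u)_{ij}=x_{k}$ where $k\in\{1,\dots,n\}$, $k\equiv i+j-1 \pmod n$, and let $J(x)=\begin{pmatrix}0&X(u)\\-X(u)&0\end{pmatrix}$. Let $\mathcal P$ be the $n\times n$ cyclic shift matrix ($\mathcal P_{i,i+1}=1$ for $1\le i\le n-1$, $\mathcal P_{n,1}=1$, all other entries $0$) and $A=\begin{pmatrix}\mathcal P&0\\0&\mathcal P\end{pmatrix}$. An admissible Hamiltonian is a homogeneous quadratic form $H(x)=\tfrac12 x^T\mathcal H x$ with a constant symmetric matrix $\mathcal H=\nabla^2H$ satisfying $A\mathcal H=\mathcal H A^T$. *)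

theory Defs
  imports "Jordan_Normal_Form.Matrix"
begin

text \<open>Indices are 0-based. For x in R^(2n) (a vector of dimension 2n),
  u = (x_0,...,x_{n-1}); the 1-based rule k = i+j-1 (mod n) becomes
  X(u)_{ij} = x_{(i+j) mod n} in 0-based indexing.\<close>

definition Xmat :: "nat \<Rightarrow> real vec \<Rightarrow> real mat" where
  "Xmat n x = mat n n (\<lambda>(i,j). x $ ((i + j) mod n))"

definition Jmat :: "nat \<Rightarrow> real vec \<Rightarrow> real mat" where
  "Jmat n x = four_block_mat (0\<^sub>m n n) (Xmat n x) (- Xmat n x) (0\<^sub>m n n)"

text \<open>Cyclic shift: P_{i,i+1} = 1 for 1 <= i <= n-1, P_{n,1} = 1 (1-based),
  i.e. P_{i,(i+1) mod n} = 1 in 0-based indexing.\<close>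
definition shiftP :: "nat \<Rightarrow> real mat" where
  "shiftP n = mat n n (\<lambda>(i,j). if j = (i + 1) mod n then 1 else 0)"

definition Amat :: "nat \<Rightarrow> real mat" where
  "Amat n = four_block_mat (shiftP n) (0\<^sub>m n n) (0\<^sub>m n n) (shiftP n)"

definition admissible_hessian :: "nat \<Rightarrow> real mat \<Rightarrow> bool" where
  "admissible_hessian n H \<longleftrightarrow> H \<in> carrier_mat (2*n) (2*n) \<and> H\<^sup>T = H \<and>
     Amat n * H = H * (Amat n)\<^sup>T"

end

theory Submission
  imports Defs
begin

text \<open>Call an \<open>n \<times> n\<close> matrix anticirculant if its \<open>(i, j)\<close> entry depends only on
  \<open>(i + j) mod n\<close>. Every \<open>X(u)\<close> is anticirculant, and \<open>\<P> B = B \<P>\<^sup>T\<close> says exactly that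
  \<open>B\<close> is anticirculant, so the admissibility condition \<open>A \<H> = \<H> A\<^sup>T\<close> makes each
  \<open>n \<times> n\<close> block of \<open>\<H>\<close> anticirculant. For anticirculants \<open>X, B, Y\<close> with generators
  \<open>a, b, c\<close>, shifting both summation indices gives
  \<open>(X B Y)(i, j) = \<Sum>k l. a(k) b(k + l - i - j) c(l)\<close> (indices mod \<open>n\<close>), which is symmetric
  in \<open>a\<close> and \<open>c\<close>; hence \<open>X B Y = Y B X\<close>. Multiplying out the block form of \<open>J(x) \<H> J(y)\<close>,
  each block is \<open>\<plusminus>X(x) \<H>\<^sub>k X(y)\<close> for a block \<open>\<H>\<^sub>k\<close> of \<open>\<H>\<close>, and the claim follows.\<close>

lemma four_block_mat_eq_iff:
  assumes "A \<in> carrier_mat nr1 nc1" "B \<in> carrier_mat nr1 nc2"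
    "C \<in> carrier_mat nr2 nc1" "D \<in> carrier_mat nr2 nc2"
    and "A' \<in> carrier_mat nr1 nc1" "B' \<in> carrier_mat nr1 nc2"
    "C' \<in> carrier_mat nr2 nc1" "D' \<in> carrier_mat nr2 nc2"
  shows "four_block_mat A B C D = four_block_mat A' B' C' D' \<longleftrightarrow> A = A' \<and> B = B' \<and> C = C' \<and> D = D'"
proof -
  have split_block_eqs: "split_block (four_block_mat A B C D) nr1 nc1 = (A, B, C, D)"
    "split_block (four_block_mat A' B' C' D') nr1 nc1 = (A', B', C', D')"
    using assms by (auto simp: split_block_def)
  show ?thesis
  proof
    assume "four_block_mat A B C D = four_block_mat A' B' C' D'"
    then have "split_block (four_block_mat A B C D) nr1 nc1 = split_block (four_block_mat A' B' C' D') nr1 nc1"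
      by (rule arg_cong)
    then show "A = A' \<and> B = B' \<and> C = C' \<and> D = D'"
      unfolding split_block_eqs by simp
  qed simp
qed

lemma mod_add_diff_cancel:
  assumes "i < (n::nat)" "a < n"
  shows "((a + (n - i)) mod n + i) mod n = a" "(i + (a + (n - i)) mod n) mod n = a"
    and "((a + i) mod n + (n - i)) mod n = a"
proof -
  have "(a + (n - i) + i) mod n = a" "(i + (a + (n - i))) mod n = a" "(a + i + (n - i)) mod n = a"
    using assms by simp_all
  then show "((a + (n - i)) mod n + i) mod n = a" "(i + (a + (n - i)) mod n) mod n = a"
    and "((a + i) mod n + (n - i)) mod n = a"
    by (simp_all only: mod_add_left_eq mod_add_right_eq)
qed

lemma sum_lessThan_rotate_mod:
  assumes "i < (n::nat)"
  shows "(\<Sum>k<n. f k) = (\<Sum>a<n. f ((a + (n - i)) mod n))"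
  by (rule sum.reindex_bij_witness[where j="\<lambda>k. (k + i) mod n" and i="\<lambda>a. (a + (n - i)) mod n"])
    (use assms mod_add_diff_cancel in auto)

lemma index_mult_mult_mat:
  fixes A B C :: "'a::comm_semiring_0 mat"
  assumes "A \<in> carrier_mat n n" "B \<in> carrier_mat n n" "C \<in> carrier_mat n n" "i < n" "j < n"
  shows "(A * B * C) $$ (i,j) = (\<Sum>l<n. \<Sum>k<n. A $$ (i,k) * B $$ (k,l) * C $$ (l,j))"
  using assms
  by (simp add: scalar_prod_def sum_distrib_left lessThan_atLeast0 mult.assoc, subst sum.swap, simp)

lemma index_shiftP_mult:
  assumes "B \<in> carrier_mat n n" "i < n" "j < n"
  shows "(shiftP n * B) $$ (i,j) = B $$ ((i + 1) mod n, j)"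
  using assms by (simp add: shiftP_def scalar_prod_def if_distrib[of "\<lambda>c. c * _"] lessThan_atLeast0[symmetric] cong: if_cong)

lemma index_mult_shiftP_transpose:
  assumes "B \<in> carrier_mat n n" "i < n" "j < n"
  shows "(B * (shiftP n)\<^sup>T) $$ (i,j) = B $$ (i, (j + 1) mod n)"
  using assms by (simp add: shiftP_def scalar_prod_def if_distrib[of "\<lambda>c. _ * c"] lessThan_atLeast0[symmetric] cong: if_cong)

definition anticirculant :: "nat \<Rightarrow> 'a mat \<Rightarrow> bool" where
  "anticirculant n M \<longleftrightarrow>
     M \<in> carrier_mat n n \<and> (\<exists>c. \<forall>i<n. \<forall>j<n. M $$ (i,j) = c ((i + j) mod n))"

lemma Xmat_carrier_mat: "Xmat n x \<in> carrier_mat n n"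
  by (simp add: Xmat_def)

lemma anticirculant_Xmat: "anticirculant n (Xmat n x)"
  unfolding anticirculant_def Xmat_def by (intro conjI exI[of _ "\<lambda>k. x $ k"]) auto

lemma anticirculant_if_shiftP_commute:
  assumes "0 < n" "B \<in> carrier_mat n n" "shiftP n * B = B * (shiftP n)\<^sup>T"
  shows "anticirculant n B"
proof -
  have shift: "B $$ ((i + 1) mod n, j) = B $$ (i, (j + 1) mod n)" if "i < n" "j < n" for i j
  proof -
    have "B $$ ((i + 1) mod n, j) = (shiftP n * B) $$ (i,j)"
      using index_shiftP_mult[OF assms(2) that] by (rule sym)
    also have "\<dots> = (B * (shiftP n)\<^sup>T) $$ (i,j)"
      unfolding assms(3) ..
    also have "\<dots> = B $$ (i, (j + 1) mod n)"
      by (rule index_mult_shiftP_transpose[OF assms(2) that])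
    finally show ?thesis .
  qed
  have hankel: "B $$ (i,j) = B $$ ((i + j) mod n, 0)" if "i < n" "j < n" for i j
    using that
  proof (induction j arbitrary: i)
    case 0
    then show ?case by simp
  next
    case (Suc j)
    have "B $$ (i, Suc j) = B $$ ((i + 1) mod n, j)"
      using shift[of i j] Suc.prems by simp
    also have "\<dots> = B $$ (((i + 1) mod n + j) mod n, 0)"
      using Suc.prems assms(1) by (intro Suc.IH) auto
    also have "\<dots> = B $$ ((i + Suc j) mod n, 0)"
      by (simp add: mod_add_left_eq)
    finally show ?case .
  qed
  show ?thesis
    unfolding anticirculant_def
  proof (intro conjI exI[of _ "\<lambda>k. B $$ (k, 0)"] allI impI)
    fix i j assume "i < n" "j < n"
    then show "B $$ (i, j) = B $$ ((i + j) mod n, 0)" by (rule hankel)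
  qed (rule assms(2))
qed

lemma index_anticirculant_triple_product:
  fixes A M C :: "'a::comm_semiring_0 mat"
  assumes "A \<in> carrier_mat n n" "M \<in> carrier_mat n n" "C \<in> carrier_mat n n"
    and "\<forall>i<n. \<forall>j<n. A $$ (i,j) = a ((i + j) mod n)"
    and "\<forall>i<n. \<forall>j<n. M $$ (i,j) = m ((i + j) mod n)"
    and "\<forall>i<n. \<forall>j<n. C $$ (i,j) = c ((i + j) mod n)"
    and i: "i < n" and j: "j < n"
  shows "(A * M * C) $$ (i,j) = (\<Sum>l<n. \<Sum>k<n. a k * m ((k + l + (n - i) + (n - j)) mod n) * c l)"
proof -
  have "(A * M * C) $$ (i,j) = (\<Sum>l<n. \<Sum>k<n. a ((i + k) mod n) * m ((k + l) mod n) * c ((l + j) mod n))"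
    unfolding index_mult_mult_mat[OF assms(1-3) i j] using assms(4-6) i j by (intro sum.cong refl) simp
  also have "\<dots> = (\<Sum>l<n. \<Sum>k<n. a k * m (((k + (n - i)) mod n + l) mod n) * c ((l + j) mod n))"
    by (rule sum.cong[OF refl], subst sum_lessThan_rotate_mod[OF i], rule sum.cong[OF refl])
      (use i mod_add_diff_cancel in auto)
  also have "\<dots> = (\<Sum>l<n. \<Sum>k<n. a k * m (((k + (n - i)) mod n + (l + (n - j)) mod n) mod n)
                     * c (((l + (n - j)) mod n + j) mod n))"
    by (rule sum_lessThan_rotate_mod[OF j])
  also have "\<dots> = (\<Sum>l<n. \<Sum>k<n. a k * m (((k + (n - i)) mod n + (l + (n - j)) mod n) mod n) * c l)"
    by (intro sum.cong refl) (use j mod_add_diff_cancel in auto)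
  also have "\<dots> = (\<Sum>l<n. \<Sum>k<n. a k * m ((k + l + (n - i) + (n - j)) mod n) * c l)"
    by (simp add: mod_add_eq ac_simps)
  finally show ?thesis .
qed

lemma anticirculant_triple_product_commute:
  fixes A M C :: "'a::comm_semiring_0 mat"
  assumes "anticirculant n A" "anticirculant n M" "anticirculant n C"
  shows "A * M * C = C * M * A"
proof -
  obtain a m c where
    A: "A \<in> carrier_mat n n" "\<forall>i<n. \<forall>j<n. A $$ (i,j) = a ((i + j) mod n)" and
    M: "M \<in> carrier_mat n n" "\<forall>i<n. \<forall>j<n. M $$ (i,j) = m ((i + j) mod n)" and
    C: "C \<in> carrier_mat n n" "\<forall>i<n. \<forall>j<n. C $$ (i,j) = c ((i + j) mod n)"
    using assms unfolding anticirculant_def by blast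
  show ?thesis
  proof (rule eq_matI)
    fix i j assume "i < dim_row (C * M * A)" "j < dim_col (C * M * A)"
    then have ij: "i < n" "j < n" using C A by auto
    show "(A * M * C) $$ (i,j) = (C * M * A) $$ (i,j)"
      unfolding index_anticirculant_triple_product[OF A(1) M(1) C(1) A(2) M(2) C(2) ij]
        index_anticirculant_triple_product[OF C(1) M(1) A(1) C(2) M(2) A(2) ij]
      by (subst sum.swap)
        (simp only: mult.commute mult.left_commute add.commute add.left_commute)
  qed (use A C in auto)
qed

lemma antidiagonal_block_triple_product:
  fixes X Y H1 H2 H3 H4 :: "'a::ring mat"
  assumes "X \<in> carrier_mat n n" "Y \<in> carrier_mat n n"
    "H1 \<in> carrier_mat n n" "H2 \<in> carrier_mat n n" "H3 \<in> carrier_mat n n" "H4 \<in> carrier_mat n n"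
  shows "four_block_mat (0\<^sub>m n n) X (- X) (0\<^sub>m n n) * four_block_mat H1 H2 H3 H4
           * four_block_mat (0\<^sub>m n n) Y (- Y) (0\<^sub>m n n)
         = four_block_mat (- (X * H4 * Y)) (X * H3 * Y) (X * H2 * Y) (- (X * H1 * Y))"
proof -
  have "four_block_mat (0\<^sub>m n n) X (- X) (0\<^sub>m n n) * four_block_mat H1 H2 H3 H4
      = four_block_mat (X * H3) (X * H4) (- (X * H1)) (- (X * H2))"
    using assms by (subst mult_four_block_mat[of _ n n _ n _ n _ _ n _ n]) auto
  also have "\<dots> * four_block_mat (0\<^sub>m n n) Y (- Y) (0\<^sub>m n n)
      = four_block_mat (- (X * H4 * Y)) (X * H3 * Y) (X * H2 * Y) (- (X * H1 * Y))"
    using assms by (subst mult_four_block_mat[of _ n n _ n _ n _ _ n _ n]) auto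
  finally show ?thesis .
qed

lemma admissible_hessian_blocks_anticirculant:
  assumes "0 < n" "admissible_hessian n H" "split_block H n n = (H1, H2, H3, H4)"
  shows "anticirculant n H1" "anticirculant n H2" "anticirculant n H3" "anticirculant n H4"
proof -
  have "dim_row H = n + n" "dim_col H = n + n"
    using assms(2) by (auto simp: admissible_hessian_def)
  note blocks = split_block[OF assms(3) this]
  have P: "shiftP n \<in> carrier_mat n n" by (simp add: shiftP_def)
  have AT: "(Amat n)\<^sup>T = four_block_mat (shiftP n)\<^sup>T (0\<^sub>m n n) (0\<^sub>m n n) (shiftP n)\<^sup>T"
    unfolding Amat_def using P by (subst transpose_four_block_mat) auto
  have "four_block_mat (shiftP n * H1) (shiftP n * H2) (shiftP n * H3) (shiftP n * H4)
      = Amat n * H"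
    unfolding Amat_def blocks(5) using P blocks(1-4)
    by (subst mult_four_block_mat[of _ n n _ n _ n _ _ n _ n]) auto
  also have "\<dots> = H * (Amat n)\<^sup>T"
    using assms(2) by (simp add: admissible_hessian_def)
  also have "\<dots> = four_block_mat (H1 * (shiftP n)\<^sup>T) (H2 * (shiftP n)\<^sup>T)
                    (H3 * (shiftP n)\<^sup>T) (H4 * (shiftP n)\<^sup>T)"
    unfolding AT blocks(5) using P blocks(1-4)
    by (subst mult_four_block_mat[of _ n n _ n _ n _ _ n _ n]) auto
  finally have "shiftP n * H1 = H1 * (shiftP n)\<^sup>T \<and> shiftP n * H2 = H2 * (shiftP n)\<^sup>T \<and>
      shiftP n * H3 = H3 * (shiftP n)\<^sup>T \<and> shiftP n * H4 = H4 * (shiftP n)\<^sup>T"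
    using P blocks(1-4) by (subst (asm) four_block_mat_eq_iff[of _ n n _ n _ n]) auto
  then show "anticirculant n H1" "anticirculant n H2" "anticirculant n H3" "anticirculant n H4"
    using assms(1) blocks(1-4) by (auto intro: anticirculant_if_shiftP_commute)
qed

theorem mainTheorem19:
  fixes n :: nat and H :: "real mat" and x y :: "real vec"
  assumes "n \<ge> 2"
    and "admissible_hessian n H"
    and "x \<in> carrier_vec (2*n)" and "y \<in> carrier_vec (2*n)"
  shows "Jmat n x * H * Jmat n y = Jmat n y * H * Jmat n x"
proof -
  \<comment> \<open>The dimensions of \<open>x\<close> and \<open>y\<close> are irrelevant: \<open>Xmat\<close> only reads their first \<open>n\<close> entries.\<close>
  obtain H1 H2 H3 H4 where split: "split_block H n n = (H1, H2, H3, H4)"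
    by (cases "split_block H n n") auto
  have "dim_row H = n + n" "dim_col H = n + n"
    using assms(2) by (auto simp: admissible_hessian_def)
  note blocks = split_block[OF split this]
  have "0 < n" using assms(1) by simp
  note anticirculant_blocks = admissible_hessian_blocks_anticirculant[OF this assms(2) split]
  have commute: "Xmat n u * B * Xmat n v = Xmat n v * B * Xmat n u" if "anticirculant n B" for B u v
    by (rule anticirculant_triple_product_commute[OF anticirculant_Xmat that anticirculant_Xmat])
  show ?thesis
    unfolding Jmat_def blocks(5)
    by (simp add: antidiagonal_block_triple_product[OF Xmat_carrier_mat Xmat_carrier_mat blocks(1-4)]
        commute anticirculant_blocks)
qed

end
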